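(* Let $n\ge2$, let $\sigma,\tau\in S_n$, and let $u,v,w\in\{1,\dots,n\}$. Then: 1. $M(\sigma,u,0)M(\tau,v,0)=M(\tau\sigma,w,0)$. 2. $M(\sigma,u,1)M(\tau,v,0)=M(\tau\sigma,u,1)$. 3. $M(\sigma,u,0)M(\tau,v,1)=M(\tau\sigma,\sigma^{-1}(v),1)$. 4. If $\sigma^{-1}(v)=u$, then $M(\sigma,u,1)M(\tau,v,1)=M(\tau\sigma,w,0)$. 5. If $\sigma^{-1}(v)\ne u$, then $M(\sigma,u,1)M(\tau,v,1)=M(\eta,\sigma^{-1}(v),1)$, where $\eta\in S_n$ is defined by $$\eta(j)=\begin{cases}\tau\sigma(j),& j\notin\{u,\sigma^{-1}(v)\},\\ \tau\sigma(u),& j=\sigma^{-1}(v),\\ \tau(v),& j=u.\end{cases}$$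
   Context: - $e_j$ is the $j$-th standard basis column vector of $\mathbb{Z}^n$. - $r_h$ is the row vector $\big((-1)^h,(-1)^{h+1},\dots,(-1)^{h+n-1}\big)$, whose $k$-th entry is $(-1)^{h+k-1}$. - Permutations are composed as functions: $(\tau\sigma)(j)=\tau(\sigma(j))$. - For $\sigma\in S_n$, $h\in\{1,\dots,n\}$ and $\epsilon\in\{0,1\}$, $M(\sigma,h,\epsilon)$ is the $n\times n$ matrix $$M(\sigma,h,\epsilon)=\sum_{j=1}^n(-1)^{j+\sigma(j)}e_je_{\sigma(j)}^T+\epsilon\Big((-1)^{h+\sigma(h)+1}e_he_{\sigma(h)}^T+e_hr_h\Big).$$ - Thus $M(\sigma,h,0)$ is the signed permutation matrix with entry $(-1)^{j+\sigma(j)}$ at position $(j,\sigma(j))$ and zeros elsewhere; it does not depend on $h$. - $M(\sigma,h,1)$ is obtained from $M(\sigma,h,0)$ by replacing its $h$-th row with $r_h$. *)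

theory Defs
  imports "Jordan_Normal_Form.Matrix" "HOL-Combinatorics.Permutations"
begin

text \<open>Entry (j,k) (1-based, j,k in {1..n}) of M(sigma,h,eps), following the defining sum literally:
  sum_i (-1)^(i+sigma i) e_i e_(sigma i)^T + eps((-1)^(h+sigma h+1) e_h e_(sigma h)^T + e_h r_h),
  where r_h has k-th entry (-1)^(h+k-1).\<close>
definition Mentry :: "(nat \<Rightarrow> nat) \<Rightarrow> nat \<Rightarrow> int \<Rightarrow> nat \<Rightarrow> nat \<Rightarrow> int" where
  "Mentry \<sigma> h \<epsilon> j k =
     (if \<sigma> j = k then (-1) ^ (j + \<sigma> j) else 0)
     + \<epsilon> * ((if j = h \<and> k = \<sigma> h then (-1) ^ (h + \<sigma> h + 1) else 0)
            + (if j = h then (-1) ^ (h + k - 1) else 0))"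

text \<open>The n x n integer matrix M(sigma,h,eps); Jordan_Normal_Form matrices are 0-indexed,
  so the 0-based entry (i,j) is the 1-based entry (i+1,j+1).\<close>
definition Mmat :: "nat \<Rightarrow> (nat \<Rightarrow> nat) \<Rightarrow> nat \<Rightarrow> int \<Rightarrow> int mat" where
  "Mmat n \<sigma> h \<epsilon> = mat n n (\<lambda>(i, j). Mentry \<sigma> h \<epsilon> (i + 1) (j + 1))"

end

theory Submission
  imports Defs
begin

text \<open>Write \<open>P\<^sub>\<sigma>\<close> for \<open>M(\<sigma>,h,0)\<close> and compute every product row by row. Since the entries
  of \<open>P\<^sub>\<sigma>\<close> are \<open>(-1)^(j+k)\<close>, the signs telescope: \<open>P\<^sub>\<sigma> P\<^sub>\<tau> = P\<^sub>\<tau>\<^sub>\<sigma>\<close> and \<open>r\<^sub>h P\<^sub>\<tau> = r\<^sub>h\<close>.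
  Right multiplication by \<open>M(\<tau>,v,1)\<close> sends the signed unit row \<open>(-1)^(j+v) e\<^sub>v\<^sup>T\<close> to the
  alternating row \<open>r\<^sub>j\<close>, and sends \<open>r\<^sub>u\<close> to \<open>r\<^sub>u P\<^sub>\<tau>\<close> corrected in row \<open>v\<close>; the correction
  \<open>(-1)^(u+v-1) r\<^sub>v = -r\<^sub>u\<close> cancels \<open>r\<^sub>u\<close> and leaves the signed unit row \<open>(-1)^(u+\<tau> v) e\<^sub>\<tau>\<^sub>v\<^sup>T\<close>.\<close>

definition signed_perm_entry :: "(nat \<Rightarrow> nat) \<Rightarrow> nat \<Rightarrow> nat \<Rightarrow> int" where
  "signed_perm_entry \<sigma> j k = (if \<sigma> j = k then (-1) ^ (j + k) else 0)"

definition alt_row :: "nat \<Rightarrow> nat \<Rightarrow> int" where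
  "alt_row h k = (-1) ^ (h + k - 1)"

lemma Mentry_0: "Mentry \<sigma> h 0 j k = signed_perm_entry \<sigma> j k"
  by (simp add: Mentry_def signed_perm_entry_def)

lemma Mentry_1:
  "Mentry \<sigma> h 1 j k = (if j = h then alt_row h k else signed_perm_entry \<sigma> j k)"
  by (auto simp add: Mentry_def signed_perm_entry_def alt_row_def minus_one_power_iff; presburger)

lemma minus_one_power_mult_eq:
  "even (a + b) = even c \<Longrightarrow> (-1::int) ^ a * (-1) ^ b = (-1) ^ c"
  by (auto simp add: power_add [symmetric] minus_one_power_iff)

lemma sum_signed_perm_entry_left:
  assumes "\<sigma> permutes {1..n}" "j \<in> {1..n}"
  shows "(\<Sum>l\<in>{1..n}. signed_perm_entry \<sigma> j l * f l) = (-1) ^ (j + \<sigma> j) * f (\<sigma> j)"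
proof -
  have "\<sigma> j \<in> {1..n}"
    using permutes_in_image [OF assms(1)] assms(2) by blast
  then show ?thesis
    by (simp add: signed_perm_entry_def if_distrib [of "\<lambda>x. x * _"] sum.delta cong: if_cong)
qed

lemma sum_signed_perm_entry_right:
  assumes "\<tau> permutes {1..n}" "k \<in> {1..n}"
  shows "(\<Sum>l\<in>{1..n}. g l * signed_perm_entry \<tau> l k)
    = g (Hilbert_Choice.inv \<tau> k) * (-1) ^ (Hilbert_Choice.inv \<tau> k + k)"
proof -
  have "\<tau> l = k \<longleftrightarrow> Hilbert_Choice.inv \<tau> k = l" for l
    using permutes_inv_eq [OF assms(1)] by metis
  moreover have "Hilbert_Choice.inv \<tau> k \<in> {1..n}"
    using permutes_in_image [OF permutes_inv [OF assms(1)]] assms(2) by blast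
  ultimately show ?thesis
    by (simp add: signed_perm_entry_def if_distrib [of "\<lambda>x. _ * x"] sum.delta cong: if_cong)
qed

lemma signed_perm_entry_mult:
  assumes "\<sigma> permutes {1..n}" "j \<in> {1..n}"
  shows "(\<Sum>l\<in>{1..n}. signed_perm_entry \<sigma> j l * signed_perm_entry \<tau> l k)
    = signed_perm_entry (\<tau> \<circ> \<sigma>) j k"
  by (subst sum_signed_perm_entry_left [OF assms])
    (auto simp: signed_perm_entry_def intro!: minus_one_power_mult_eq)

lemma alt_row_mult_signed_perm:
  assumes "\<tau> permutes {1..n}" "k \<in> {1..n}"
  shows "(\<Sum>l\<in>{1..n}. alt_row h l * signed_perm_entry \<tau> l k) = alt_row h k"
proof -
  have "Hilbert_Choice.inv \<tau> k \<in> {1..n}"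
    using permutes_in_image [OF permutes_inv [OF assms(1)]] assms(2) by blast
  with assms(2) show ?thesis
    by (subst sum_signed_perm_entry_right [OF assms])
      (auto simp: alt_row_def intro!: minus_one_power_mult_eq)
qed

lemma sum_Mentry_1_mult:
  "(\<Sum>l\<in>A. Mentry \<sigma> h 1 j l * f l) = (if j = h then (\<Sum>l\<in>A. alt_row h l * f l)
    else (\<Sum>l\<in>A. signed_perm_entry \<sigma> j l * f l))"
  by (simp add: Mentry_1)

lemma sum_mult_Mentry_1:
  assumes "v \<in> {1..n}"
  shows "(\<Sum>l\<in>{1..n}. g l * Mentry \<tau> v 1 l k)
    = (\<Sum>l\<in>{1..n}. g l * signed_perm_entry \<tau> l k)
      + g v * (alt_row v k - signed_perm_entry \<tau> v k)"
proof -
  have "g l * Mentry \<tau> v 1 l k = g l * signed_perm_entry \<tau> l k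
      + (if l = v then g v * (alt_row v k - signed_perm_entry \<tau> v k) else 0)" for l
    by (simp add: Mentry_1 algebra_simps)
  then show ?thesis
    using assms by (simp add: sum.distrib sum.delta)
qed

lemma signed_perm_row_mult_Mentry_1:
  assumes "\<sigma> permutes {1..n}" "j \<in> {1..n}" "k \<in> {1..n}"
  shows "(\<Sum>l\<in>{1..n}. signed_perm_entry \<sigma> j l * Mentry \<tau> v 1 l k)
    = (if \<sigma> j = v then alt_row j k else signed_perm_entry (\<tau> \<circ> \<sigma>) j k)"
  using assms(2,3)
  by (subst sum_signed_perm_entry_left [OF assms(1,2)])
    (auto simp: Mentry_1 signed_perm_entry_def alt_row_def intro!: minus_one_power_mult_eq)

lemma alt_row_mult_Mentry_1:
  assumes "\<tau> permutes {1..n}" "v \<in> {1..n}" "k \<in> {1..n}"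
  shows "(\<Sum>l\<in>{1..n}. alt_row u l * Mentry \<tau> v 1 l k)
    = (if \<tau> v = k then (-1) ^ (u + k) else 0)"
  unfolding sum_mult_Mentry_1 [OF assms(2)] alt_row_mult_signed_perm [OF assms(1,3)]
  using assms(2,3)
  by (auto simp: alt_row_def signed_perm_entry_def minus_one_power_iff; presburger)

lemma Mmat_mult_Mmat_eqI:
  assumes "\<And>j k. j \<in> {1..n} \<Longrightarrow> k \<in> {1..n} \<Longrightarrow>
    (\<Sum>l\<in>{1..n}. Mentry \<sigma> h e j l * Mentry \<tau> h' e' l k) = Mentry \<rho> g f j k"
  shows "Mmat n \<sigma> h e * Mmat n \<tau> h' e' = Mmat n \<rho> g f"
proof (rule eq_matI)
  fix i k
  assume "i < dim_row (Mmat n \<rho> g f)" "k < dim_col (Mmat n \<rho> g f)"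
  then have ik: "i < n" "k < n"
    by (simp_all add: Mmat_def)
  have "(Mmat n \<sigma> h e * Mmat n \<tau> h' e') $$ (i, k)
      = (\<Sum>l<n. Mentry \<sigma> h e (i + 1) (l + 1) * Mentry \<tau> h' e' (l + 1) (k + 1))"
    using ik by (simp add: Mmat_def scalar_prod_def lessThan_atLeast0)
  also have "\<dots> = (\<Sum>l\<in>{1..n}. Mentry \<sigma> h e (i + 1) l * Mentry \<tau> h' e' l (k + 1))"
    by (rule sum.reindex_bij_witness [where i = "\<lambda>l. l - 1" and j = "\<lambda>l. l + 1"]) auto
  also have "\<dots> = Mmat n \<rho> g f $$ (i, k)"
    using assms [of "i + 1" "k + 1"] ik by (simp add: Mmat_def)
  finally show "(Mmat n \<sigma> h e * Mmat n \<tau> h' e') $$ (i, k) = Mmat n \<rho> g f $$ (i, k)" .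
qed (simp_all add: Mmat_def)

lemma Mmat_0_mult_Mmat_0:
  assumes "\<sigma> permutes {1..n}"
  shows "Mmat n \<sigma> u 0 * Mmat n \<tau> v 0 = Mmat n (\<tau> \<circ> \<sigma>) w 0"
  by (rule Mmat_mult_Mmat_eqI) (unfold Mentry_0, rule signed_perm_entry_mult [OF assms])

lemma Mmat_1_mult_Mmat_0:
  assumes "\<sigma> permutes {1..n}" "\<tau> permutes {1..n}"
  shows "Mmat n \<sigma> u 1 * Mmat n \<tau> v 0 = Mmat n (\<tau> \<circ> \<sigma>) u 1"
proof (rule Mmat_mult_Mmat_eqI)
  fix j k
  assume "j \<in> {1..n}" "k \<in> {1..n}"
  then show "(\<Sum>l\<in>{1..n}. Mentry \<sigma> u 1 j l * Mentry \<tau> v 0 l k) = Mentry (\<tau> \<circ> \<sigma>) u 1 j k"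
    using signed_perm_entry_mult [OF assms(1)] alt_row_mult_signed_perm [OF assms(2)]
    by (simp add: Mentry_0 Mentry_1)
qed

lemma Mmat_0_mult_Mmat_1:
  assumes "\<sigma> permutes {1..n}"
  shows "Mmat n \<sigma> u 0 * Mmat n \<tau> v 1 = Mmat n (\<tau> \<circ> \<sigma>) (Hilbert_Choice.inv \<sigma> v) 1"
proof (rule Mmat_mult_Mmat_eqI)
  fix j k
  assume jk: "j \<in> {1..n}" "k \<in> {1..n}"
  have "\<sigma> j = v \<longleftrightarrow> j = Hilbert_Choice.inv \<sigma> v"
    using permutes_inv_eq [OF assms] by metis
  then show "(\<Sum>l\<in>{1..n}. Mentry \<sigma> u 0 j l * Mentry \<tau> v 1 l k)
      = Mentry (\<tau> \<circ> \<sigma>) (Hilbert_Choice.inv \<sigma> v) 1 j k"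
    using signed_perm_row_mult_Mentry_1 [OF assms jk] by (simp add: Mentry_0 Mentry_1)
qed

lemma Mmat_1_mult_Mmat_1_cancel:
  assumes "\<sigma> permutes {1..n}" "\<tau> permutes {1..n}" "v \<in> {1..n}"
    and "Hilbert_Choice.inv \<sigma> v = u"
  shows "Mmat n \<sigma> u 1 * Mmat n \<tau> v 1 = Mmat n (\<tau> \<circ> \<sigma>) w 0"
proof (rule Mmat_mult_Mmat_eqI)
  fix j k
  assume jk: "j \<in> {1..n}" "k \<in> {1..n}"
  have "\<sigma> j = v \<longleftrightarrow> j = u"
    using permutes_inv_eq [OF assms(1)] assms(4) by metis
  then show "(\<Sum>l\<in>{1..n}. Mentry \<sigma> u 1 j l * Mentry \<tau> v 1 l k) = Mentry (\<tau> \<circ> \<sigma>) w 0 j k"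
    unfolding sum_Mentry_1_mult signed_perm_row_mult_Mentry_1 [OF assms(1) jk]
      alt_row_mult_Mentry_1 [OF assms(2,3) jk(2)] Mentry_0
    by (auto simp: signed_perm_entry_def)
qed

lemma Mmat_1_mult_Mmat_1_swap:
  assumes "\<sigma> permutes {1..n}" "\<tau> permutes {1..n}" "v \<in> {1..n}"
    and "Hilbert_Choice.inv \<sigma> v \<noteq> u"
  shows "Mmat n \<sigma> u 1 * Mmat n \<tau> v 1 =
    Mmat n (\<lambda>j. if j = Hilbert_Choice.inv \<sigma> v then \<tau> (\<sigma> u) else if j = u then \<tau> v else \<tau> (\<sigma> j))
      (Hilbert_Choice.inv \<sigma> v) 1"
proof (rule Mmat_mult_Mmat_eqI)
  fix j k
  assume jk: "j \<in> {1..n}" "k \<in> {1..n}"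
  have "\<sigma> j = v \<longleftrightarrow> j = Hilbert_Choice.inv \<sigma> v"
    using permutes_inv_eq [OF assms(1)] by metis
  with assms(4) show "(\<Sum>l\<in>{1..n}. Mentry \<sigma> u 1 j l * Mentry \<tau> v 1 l k) =
      Mentry (\<lambda>j. if j = Hilbert_Choice.inv \<sigma> v then \<tau> (\<sigma> u) else if j = u then \<tau> v else \<tau> (\<sigma> j))
        (Hilbert_Choice.inv \<sigma> v) 1 j k"
    unfolding sum_Mentry_1_mult signed_perm_row_mult_Mentry_1 [OF assms(1) jk]
      alt_row_mult_Mentry_1 [OF assms(2,3) jk(2)]
    by (auto simp: Mentry_1 signed_perm_entry_def)
qed

theorem mainTheorem11:
  fixes n u v w :: nat and \<sigma> \<tau> :: "nat \<Rightarrow> nat"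
  assumes "n \<ge> 2"
    and "\<sigma> permutes {1..n}" and "\<tau> permutes {1..n}"
    and "u \<in> {1..n}" and "v \<in> {1..n}" and "w \<in> {1..n}"
  shows "Mmat n \<sigma> u 0 * Mmat n \<tau> v 0 = Mmat n (\<tau> \<circ> \<sigma>) w 0
    \<and> Mmat n \<sigma> u 1 * Mmat n \<tau> v 0 = Mmat n (\<tau> \<circ> \<sigma>) u 1
    \<and> Mmat n \<sigma> u 0 * Mmat n \<tau> v 1 = Mmat n (\<tau> \<circ> \<sigma>) (Hilbert_Choice.inv \<sigma> v) 1
    \<and> (Hilbert_Choice.inv \<sigma> v = u \<longrightarrow>
         Mmat n \<sigma> u 1 * Mmat n \<tau> v 1 = Mmat n (\<tau> \<circ> \<sigma>) w 0)
    \<and> (Hilbert_Choice.inv \<sigma> v \<noteq> u \<longrightarrow>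
         Mmat n \<sigma> u 1 * Mmat n \<tau> v 1 =
         Mmat n (\<lambda>j. if j = Hilbert_Choice.inv \<sigma> v then \<tau> (\<sigma> u)
                     else if j = u then \<tau> v
                     else \<tau> (\<sigma> j)) (Hilbert_Choice.inv \<sigma> v) 1)"
  using Mmat_0_mult_Mmat_0 [OF assms(2)] Mmat_1_mult_Mmat_0 [OF assms(2,3)]
    Mmat_0_mult_Mmat_1 [OF assms(2)] Mmat_1_mult_Mmat_1_cancel [OF assms(2,3,5)]
    Mmat_1_mult_Mmat_1_swap [OF assms(2,3,5)]
  by blast

end
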